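(* Let $n,k$ be positive integers, let $T:M_n(\mathbb{C})\to M_n(\mathbb{C})$ be a UCPT$(n)$-Schur multiplier and $S:M_k(\mathbb{C})\to M_k(\mathbb{C})$ a UCPT$(k)$-Schur multiplier. Then $T\otimes S\in\mathrm{conv}(\mathrm{Aut}(M_n(\mathbb{C})\otimes M_k(\mathbb{C})))$ if and only if $T\in\mathrm{conv}(\mathrm{Aut}(M_n(\mathbb{C})))$ and $S\in\mathrm{conv}(\mathrm{Aut}(M_k(\mathbb{C})))$.
   Context: A UCPT$(n)$-map is a unital completely positive trace-preserving linear map on $M_n(\mathbb{C})$. A UCPT$(n)$-Schur multiplier is a UCPT$(n)$-map of the form $x=(x_{ij})\mapsto (b_{ij}x_{ij})$ for some fixed matrix $(b_{ij})\in M_n(\mathbb{C})$. $\mathrm{Aut}(M_m(\mathbb{C}))$ is the set of maps $x\mapsto u^*xu$ with $u$ unitary, $\mathrm{conv}$ denotes convex hull, and $M_n(\mathbb{C})\otimes M_k(\mathbb{C})$ is identified with $M_{nk}(\mathbb{C})$. *)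

theory Defs
  imports "HOL-Analysis.Analysis"
begin

text \<open>M_n(C) (x) M_k(C) is identified with the matrices indexed by
  the finite type 'n \<times> 'k, the Kronecker product being A (x) B = [A_ii' B_jj'].\<close>

type_synonym 'n cmat = "complex^'n^'n"

definition adj :: "'n cmat \<Rightarrow> 'n::finite cmat" where
  "adj u = (\<chi> i j. cnj (u $ j $ i))"

definition unitary_mat :: "'n::finite cmat \<Rightarrow> bool" where
  "unitary_mat u \<longleftrightarrow> adj u ** u = mat 1 \<and> u ** adj u = mat 1"

definition mtrace :: "'n::finite cmat \<Rightarrow> complex" where
  "mtrace x = (\<Sum>i\<in>UNIV. x $ i $ i)"

definition cmat_scale :: "complex \<Rightarrow> 'n::finite cmat \<Rightarrow> 'n cmat" where
  "cmat_scale c x = (\<chi> i j. c * x $ i $ j)"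

definition clinear_map :: "('n::finite cmat \<Rightarrow> 'n cmat) \<Rightarrow> bool" where
  "clinear_map T \<longleftrightarrow> (\<forall>x y. T (x + y) = T x + T y) \<and> (\<forall>c x. T (cmat_scale c x) = cmat_scale c (T x))"

text \<open>Positive semidefiniteness of an m \<times> m block matrix with blocks X p q in M_n(C)
  (i.e. of an element of M_m(M_n(C)) = M_m(C) (x) M_n(C)): v^* X v >= 0 for all v.\<close>
definition block_psd :: "nat \<Rightarrow> (nat \<Rightarrow> nat \<Rightarrow> 'n::finite cmat) \<Rightarrow> bool" where
  "block_psd m X \<longleftrightarrow> (\<forall>v :: nat \<Rightarrow> complex^'n.
     (let s = (\<Sum>p<m. \<Sum>q<m. \<Sum>i\<in>UNIV. \<Sum>j\<in>UNIV. cnj (v p $ i) * X p q $ i $ j * v q $ j)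
      in s \<in> \<real> \<and> 0 \<le> Re s))"

text \<open>Complete positivity: id_m (x) T is positive for every m.\<close>
definition completely_positive :: "('n::finite cmat \<Rightarrow> 'n cmat) \<Rightarrow> bool" where
  "completely_positive T \<longleftrightarrow>
     (\<forall>m X. block_psd m X \<longrightarrow> block_psd m (\<lambda>p q. T (X p q)))"

definition ucpt :: "('n::finite cmat \<Rightarrow> 'n cmat) \<Rightarrow> bool" where
  "ucpt T \<longleftrightarrow> clinear_map T \<and> T (mat 1) = mat 1 \<and> completely_positive T
      \<and> (\<forall>x. mtrace (T x) = mtrace x)"

definition ucpt_schur :: "('n::finite cmat \<Rightarrow> 'n cmat) \<Rightarrow> bool" where
  "ucpt_schur T \<longleftrightarrow> ucpt T \<and> (\<exists>b::'n cmat. \<forall>x. T x = (\<chi> i j. b $ i $ j * x $ i $ j))"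

definition Aut :: "('n::finite cmat \<Rightarrow> 'n cmat) set" where
  "Aut = {\<lambda>x. adj u ** x ** u | u. unitary_mat u}"

definition conv_maps :: "('n::finite cmat \<Rightarrow> 'n cmat) set \<Rightarrow> ('n cmat \<Rightarrow> 'n cmat) set" where
  "conv_maps A = {T. \<exists>(N::nat) (p::nat \<Rightarrow> real) \<Phi>.
      (\<forall>l<N. 0 \<le> p l \<and> \<Phi> l \<in> A) \<and> (\<Sum>l<N. p l) = 1 \<and>
      (\<forall>x. T x = (\<Sum>l<N. p l *\<^sub>R \<Phi> l x))}"

definition kron :: "'n::finite cmat \<Rightarrow> 'k::finite cmat \<Rightarrow> ('n \<times> 'k) cmat" where
  "kron a b = (\<chi> r s. a $ fst r $ fst s * b $ snd r $ snd s)"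

definition unit_mat :: "'n \<Rightarrow> 'n \<Rightarrow> 'n::finite cmat" where
  "unit_mat i j = (\<chi> r s. if r = i \<and> s = j then 1 else 0)"

definition tensor_map :: "('n::finite cmat \<Rightarrow> 'n cmat) \<Rightarrow> ('k::finite cmat \<Rightarrow> 'k cmat)
    \<Rightarrow> ('n \<times> 'k) cmat \<Rightarrow> ('n \<times> 'k) cmat" where
  "tensor_map T S x = (\<Sum>i\<in>UNIV. \<Sum>i'\<in>UNIV. \<Sum>j\<in>UNIV. \<Sum>j'\<in>UNIV.
      cmat_scale (x $ (i, j) $ (i', j')) (kron (T (unit_mat i i')) (S (unit_mat j j'))))"

end

theory Submission
  imports Defs
begin

text \<open>For the direction from right to left: tensoring the convex combinations
  \<open>\<Sum> p\<^sub>l Ad u\<^sub>l\<close> and \<open>\<Sum> q\<^sub>m Ad v\<^sub>m\<close> gives the convex combination \<open>\<Sum> p\<^sub>l q\<^sub>m Ad (u\<^sub>l \<otimes> v\<^sub>m)\<close>.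
  Conversely, since a unital Schur multiplier \<open>S\<close> has unit diagonal, \<open>T\<close> is the compression of
  \<open>T \<otimes> S\<close> to a slice \<open>M\<^sub>n \<otimes> E\<^sub>j\<^sub>j\<close>, and symmetrically for \<open>S\<close>. Compressing \<open>\<Sum> p\<^sub>l Ad w\<^sub>l\<close> yields
  \<open>\<Sum> p\<^sub>l Ad a\<^sub>l\<close> with \<open>a\<^sub>l\<close> a square submatrix of the unitary \<open>w\<^sub>l\<close>, whose columns have norm at
  most 1. Unitality of the compression forces these columns to have norm exactly 1 whenever
  \<open>p\<^sub>l > 0\<close>, so such \<open>a\<^sub>l\<close> are unitary.\<close>

abbreviation Ad :: "'n::finite cmat \<Rightarrow> 'n cmat \<Rightarrow> 'n cmat" where
  "Ad u x \<equiv> adj u ** x ** u"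

lemma cmat_eqI: "(\<And>i j. A $ i $ j = B $ i $ j) \<Longrightarrow> A = B"
  by (simp add: vec_eq_iff)

lemma cmat_prod_eqI:
  "(\<And>a b c d. A $ (a, b) $ (c, d) = B $ (a, b) $ (c, d)) \<Longrightarrow> A = B"
  by (simp add: vec_eq_iff)

lemma matrix_mult_entry: "(a ** b) $ i $ j = (\<Sum>k\<in>UNIV. a $ i $ k * b $ k $ j)"
  by (simp add: matrix_matrix_mult_def)

lemma adj_mult_entry: "(adj u ** v) $ a $ c = (\<Sum>i\<in>UNIV. cnj (u $ i $ a) * v $ i $ c)"
  by (simp add: matrix_mult_entry adj_def)

lemma Ad_entry: "Ad u x $ a $ c = (\<Sum>k\<in>UNIV. \<Sum>k'\<in>UNIV. cnj (u $ k $ a) * x $ k $ k' * u $ k' $ c)"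
proof -
  have "Ad u x $ a $ c = (\<Sum>k'\<in>UNIV. \<Sum>k\<in>UNIV. cnj (u $ k $ a) * x $ k $ k' * u $ k' $ c)"
    by (simp add: matrix_mult_entry adj_def sum_distrib_right)
  also have "\<dots> = (\<Sum>k\<in>UNIV. \<Sum>k'\<in>UNIV. cnj (u $ k $ a) * x $ k $ k' * u $ k' $ c)"
    by (rule sum.swap)
  finally show ?thesis .
qed

lemma mat_one_entry: "(mat 1 :: 'n::finite cmat) $ a $ c = (if a = c then 1 else 0)"
  by (simp add: mat_def)

lemma scaleR_sum_entry:
  "(\<Sum>l\<in>I. p l *\<^sub>R M l) $ a $ c = (\<Sum>l\<in>I. of_real (p l) * M l $ a $ c)"
  by (simp flip: scaleR_conv_of_real)

lemma unit_mat_entry: "unit_mat i j $ a $ c = (if a = i \<and> c = j then 1 else 0)"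
  by (simp add: unit_mat_def)

lemma Ad_unit_mat_entry: "Ad u (unit_mat i i') $ a $ c = cnj (u $ i $ a) * u $ i' $ c"
proof -
  have "cnj (u $ k $ a) * unit_mat i i' $ k $ k' * u $ k' $ c =
      (if k' = i' then if k = i then cnj (u $ k $ a) * u $ k' $ c else 0 else 0)" for k k'
    by (simp add: unit_mat_entry)
  then show ?thesis
    by (simp add: Ad_entry)
qed

lemma sum_UNIV_prod:
  "(\<Sum>r\<in>UNIV. f r) = (\<Sum>i\<in>UNIV. \<Sum>j\<in>UNIV. f (i, j))"
  for f :: "'a::finite \<times> 'b::finite \<Rightarrow> 'c::comm_monoid_add"
  by (simp add: sum.cartesian_product flip: UNIV_Times_UNIV)

lemma kron_entry: "kron a b $ (i, j) $ (k, l) = a $ i $ k * b $ j $ l"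
  by (simp add: kron_def)

lemma adj_kron: "adj (kron u v) = kron (adj u) (adj v)"
  by (simp add: vec_eq_iff adj_def kron_def)

lemma kron_mult: "kron a b ** kron c d = kron (a ** c) (b ** d)"
  by (rule cmat_prod_eqI) (simp add: matrix_mult_entry sum_UNIV_prod kron_entry sum_product mult_ac)

lemma kron_one: "kron (mat 1) (mat 1) = (mat 1 :: ('n::finite \<times> 'k::finite) cmat)"
  by (auto simp add: vec_eq_iff kron_def mat_one_entry)

lemma unitary_mat_iff_isometry: "unitary_mat u \<longleftrightarrow> adj u ** u = mat 1"
  using matrix_left_right_inverse unfolding unitary_mat_def by blast

lemma unitary_kron: "unitary_mat u \<Longrightarrow> unitary_mat v \<Longrightarrow> unitary_mat (kron u v)"
  by (simp add: unitary_mat_iff_isometry adj_kron kron_mult kron_one)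

lemma unitary_one: "unitary_mat (mat 1)"
  by (simp add: unitary_mat_iff_isometry adj_def vec_eq_iff mat_one_entry)

lemma tensor_map_entry:
  "tensor_map T S x $ (a, b) $ (c, d) = (\<Sum>i\<in>UNIV. \<Sum>i'\<in>UNIV. \<Sum>j\<in>UNIV. \<Sum>j'\<in>UNIV.
     x $ (i, j) $ (i', j') * (T (unit_mat i i') $ a $ c * S (unit_mat j j') $ b $ d))"
  by (simp add: tensor_map_def cmat_scale_def kron_def)

lemma tensor_map_Ad: "tensor_map (Ad u) (Ad v) = Ad (kron u v)"
proof (intro ext cmat_prod_eqI)
  fix x a b c d
  have "Ad (kron u v) x $ (a, b) $ (c, d) = (\<Sum>i\<in>UNIV. \<Sum>j\<in>UNIV. \<Sum>i'\<in>UNIV. \<Sum>j'\<in>UNIV.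
      x $ (i, j) $ (i', j') * (cnj (u $ i $ a) * u $ i' $ c * (cnj (v $ j $ b) * v $ j' $ d)))"
    by (simp add: Ad_entry sum_UNIV_prod kron_entry sum_distrib_left sum_distrib_right mult_ac)
  also have "\<dots> = tensor_map (Ad u) (Ad v) x $ (a, b) $ (c, d)"
    unfolding tensor_map_entry Ad_unit_mat_entry
    by (rule sum.cong[OF refl], rule sum.swap)
  finally show "tensor_map (Ad u) (Ad v) x $ (a, b) $ (c, d) = Ad (kron u v) x $ (a, b) $ (c, d)" ..
qed

lemma tensor_map_sum_scaleR:
  assumes "\<And>x. T x = (\<Sum>l\<in>I. p l *\<^sub>R \<Phi> l x)" and "\<And>x. S x = (\<Sum>m\<in>J. q m *\<^sub>R \<Psi> m x)"
  shows "tensor_map T S x = (\<Sum>l\<in>I. \<Sum>m\<in>J. (p l * q m) *\<^sub>R tensor_map (\<Phi> l) (\<Psi> m) x)"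
proof (intro cmat_prod_eqI)
  fix a b c d
  have "tensor_map T S x $ (a, b) $ (c, d) = (\<Sum>l\<in>I. \<Sum>m\<in>J. of_real (p l * q m) * tensor_map (\<Phi> l) (\<Psi> m) x $ (a, b) $ (c, d))"
    unfolding tensor_map_entry assms scaleR_sum_entry
    by (simp add: sum_product sum_distrib_left sum.swap[where B = I] mult_ac)
       (simp add: sum.swap[where B = J])
  then show "tensor_map T S x $ (a, b) $ (c, d) = (\<Sum>l\<in>I. \<Sum>m\<in>J. (p l * q m) *\<^sub>R tensor_map (\<Phi> l) (\<Psi> m) x) $ (a, b) $ (c, d)"
    by simp (simp add: scaleR_conv_of_real)
qed

lemma conv_maps_AutE:
  fixes T :: "'n::finite cmat \<Rightarrow> 'n cmat"
  assumes "T \<in> conv_maps Aut"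
  obtains N :: nat and p :: "nat \<Rightarrow> real" and u :: "nat \<Rightarrow> 'n cmat"
  where "\<forall>l<N. 0 \<le> p l \<and> unitary_mat (u l)" and "(\<Sum>l<N. p l) = 1"
    and "\<And>x. T x = (\<Sum>l<N. p l *\<^sub>R Ad (u l) x)"
proof -
  obtain N p and \<Phi> :: "nat \<Rightarrow> 'n cmat \<Rightarrow> 'n cmat"
    where h: "\<forall>l<N. 0 \<le> p l \<and> \<Phi> l \<in> Aut" "(\<Sum>l<N. p l) = 1"
      "\<forall>x. T x = (\<Sum>l<N. p l *\<^sub>R \<Phi> l x)"
    using assms unfolding conv_maps_def by blast
  have "\<forall>l\<in>{..<N}. \<exists>u. unitary_mat u \<and> \<Phi> l = Ad u"
    using h(1) unfolding Aut_def by auto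
  then obtain u where "\<forall>l\<in>{..<N}. unitary_mat (u l) \<and> \<Phi> l = Ad (u l)"
    by metis
  with h show thesis
    by (intro that[of N p u]) auto
qed

lemma conv_maps_finI:
  assumes "finite I" and "\<forall>l\<in>I. 0 \<le> p l \<and> \<Phi> l \<in> A" and "sum p I = 1"
    and "\<And>x. T x = (\<Sum>l\<in>I. p l *\<^sub>R \<Phi> l x)"
  shows "T \<in> conv_maps A"
proof -
  obtain h where h: "bij_betw h {..<card I} I"
    using ex_bij_betw_nat_finite[OF assms(1)] by (auto simp: atLeast0LessThan)
  have "\<forall>l<card I. 0 \<le> p (h l) \<and> \<Phi> (h l) \<in> A"
    using assms(2) bij_betwE[OF h] by auto
  moreover have "(\<Sum>l<card I. p (h l)) = 1"
    using assms(3) sum.reindex_bij_betw[OF h, of p] by simp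
  moreover have "T x = (\<Sum>l<card I. p (h l) *\<^sub>R \<Phi> (h l) x)" for x
    using assms(4) sum.reindex_bij_betw[OF h, of "\<lambda>l. p l *\<^sub>R \<Phi> l x"] by simp
  ultimately show ?thesis
    unfolding conv_maps_def by (intro CollectI exI[of _ "card I"] exI[of _ "p \<circ> h"] exI[of _ "\<Phi> \<circ> h"]) auto
qed

lemma Ad_in_Aut: "unitary_mat u \<Longrightarrow> Ad u \<in> Aut"
  by (auto simp: Aut_def)

lemma tensor_map_conv_maps_Aut:
  fixes T :: "'n::finite cmat \<Rightarrow> 'n cmat" and S :: "'k::finite cmat \<Rightarrow> 'k cmat"
  assumes "T \<in> conv_maps Aut" and "S \<in> conv_maps Aut"
  shows "tensor_map T S \<in> conv_maps Aut"
proof -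
  obtain N :: nat and p u where u: "\<forall>l<N. 0 \<le> p l \<and> unitary_mat (u l)" "(\<Sum>l<N. p l) = 1"
    and T: "\<And>x. T x = (\<Sum>l<N. p l *\<^sub>R Ad (u l) x)"
    using conv_maps_AutE[OF assms(1)] by blast
  obtain M :: nat and q v where v: "\<forall>m<M. 0 \<le> q m \<and> unitary_mat (v m)" "(\<Sum>m<M. q m) = 1"
    and S: "\<And>x. S x = (\<Sum>m<M. q m *\<^sub>R Ad (v m) x)"
    using conv_maps_AutE[OF assms(2)] by blast
  show ?thesis
  proof (rule conv_maps_finI[where I = "{..<N} \<times> {..<M}" and p = "\<lambda>(l, m). p l * q m"
        and \<Phi> = "\<lambda>(l, m). Ad (kron (u l) (v m))"])
    show "\<forall>lm\<in>{..<N} \<times> {..<M}. 0 \<le> (case lm of (l, m) \<Rightarrow> p l * q m) \<and>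
        (case lm of (l, m) \<Rightarrow> Ad (kron (u l) (v m))) \<in> Aut"
      using u(1) v(1) by (auto intro: Ad_in_Aut unitary_kron)
    show "(\<Sum>lm\<in>{..<N} \<times> {..<M}. case lm of (l, m) \<Rightarrow> p l * q m) = 1"
      using u(2) v(2) by (simp add: sum.cartesian_product[symmetric] sum_product[symmetric])
    show "tensor_map T S x = (\<Sum>lm\<in>{..<N} \<times> {..<M}.
        (case lm of (l, m) \<Rightarrow> p l * q m) *\<^sub>R (case lm of (l, m) \<Rightarrow> Ad (kron (u l) (v m))) x)" for x
      by (simp add: tensor_map_sum_scaleR[OF T S] tensor_map_Ad sum.cartesian_product split_def)
  qed simp
qed

definition submatrix :: "('n::finite \<Rightarrow> 'm::finite) \<Rightarrow> 'm cmat \<Rightarrow> 'n cmat" where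
  "submatrix e y = (\<chi> i j. y $ e i $ e j)"

definition extend_by_zero :: "('n::finite \<Rightarrow> 'm::finite) \<Rightarrow> 'n cmat \<Rightarrow> 'm cmat" where
  "extend_by_zero e x = (\<chi> r s. if r \<in> range e \<and> s \<in> range e then x $ inv e r $ inv e s else 0)"

lemma submatrix_entry: "submatrix e y $ i $ j = y $ e i $ e j"
  by (simp add: submatrix_def)

lemma extend_by_zero_entry: "inj e \<Longrightarrow> extend_by_zero e x $ e i $ e j = x $ i $ j"
  by (simp add: extend_by_zero_def)

lemma extend_by_zero_outside: "r \<notin> range e \<or> s \<notin> range e \<Longrightarrow> extend_by_zero e x $ r $ s = 0"
  by (auto simp add: extend_by_zero_def)

lemma submatrix_sum_scaleR:
  "submatrix e (\<Sum>l\<in>I. p l *\<^sub>R M l) = (\<Sum>l\<in>I. p l *\<^sub>R submatrix e (M l))"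
  by (rule cmat_eqI) (simp add: submatrix_entry scaleR_sum_entry)

lemma sum_UNIV_supported_on_range:
  fixes e :: "'a::finite \<Rightarrow> 'b::finite"
  assumes "inj e" and "\<And>r. r \<notin> range e \<Longrightarrow> g r = 0"
  shows "(\<Sum>r\<in>UNIV. g r) = (\<Sum>i\<in>UNIV. g (e i))"
proof -
  have "(\<Sum>r\<in>UNIV. g r) = (\<Sum>r\<in>range e. g r)"
    by (rule sum.mono_neutral_right) (use assms(2) in auto)
  also have "\<dots> = (\<Sum>i\<in>UNIV. g (e i))"
    by (simp add: sum.reindex assms(1))
  finally show ?thesis .
qed

lemma submatrix_Ad_extend_by_zero:
  assumes "inj e"
  shows "submatrix e (Ad w (extend_by_zero e x)) = Ad (submatrix e w) x"
proof (rule cmat_eqI)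
  fix a c
  have "Ad w (extend_by_zero e x) $ e a $ e c =
      (\<Sum>k\<in>UNIV. \<Sum>k'\<in>UNIV. cnj (w $ e k $ e a) * extend_by_zero e x $ e k $ e k' * w $ e k' $ e c)"
    unfolding Ad_entry
    by (subst sum_UNIV_supported_on_range[OF assms], simp add: extend_by_zero_outside)
       (rule sum.cong[OF refl], rule sum_UNIV_supported_on_range[OF assms], simp add: extend_by_zero_outside)
  then show "submatrix e (Ad w (extend_by_zero e x)) $ a $ c = Ad (submatrix e w) x $ a $ c"
    by (simp add: submatrix_entry Ad_entry extend_by_zero_entry[OF assms])
qed

lemma adj_mult_self_diag: "(adj a ** a) $ c $ c = of_real (\<Sum>i\<in>UNIV. (cmod (a $ i $ c))\<^sup>2)"
  by (simp add: adj_mult_entry complex_norm_square mult.commute del: of_real_power)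

lemma unitary_col_norm:
  assumes "unitary_mat w"
  shows "(\<Sum>r\<in>UNIV. (cmod (w $ r $ c))\<^sup>2) = 1"
proof -
  from assms have "of_real (\<Sum>r\<in>UNIV. (cmod (w $ r $ c))\<^sup>2) = (1::complex)"
    by (simp only: adj_mult_self_diag[symmetric] unitary_mat_def mat_one_entry) simp
  then show ?thesis
    by (simp only: of_real_eq_1_iff)
qed

lemma submatrix_col_norm_le:
  assumes "unitary_mat w" and "inj e"
  shows "(\<Sum>i\<in>UNIV. (cmod (submatrix e w $ i $ c))\<^sup>2) \<le> 1"
proof -
  have "(\<Sum>i\<in>UNIV. (cmod (submatrix e w $ i $ c))\<^sup>2) = (\<Sum>r\<in>range e. (cmod (w $ r $ e c))\<^sup>2)"
    by (simp add: submatrix_entry sum.reindex assms(2))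
  also have "\<dots> \<le> (\<Sum>r\<in>UNIV. (cmod (w $ r $ e c))\<^sup>2)"
    by (rule sum_mono2) auto
  finally show ?thesis
    using unitary_col_norm[OF assms(1)] by simp
qed

lemma unitary_submatrix:
  assumes "unitary_mat w" and "inj e"
    and full: "\<And>c. (\<Sum>i\<in>UNIV. (cmod (submatrix e w $ i $ c))\<^sup>2) = 1"
  shows "unitary_mat (submatrix e w)"
proof -
  have vanish: "w $ r $ e c = 0" if "r \<notin> range e" for r c
  proof -
    have "(\<Sum>r\<in>UNIV. (cmod (w $ r $ e c))\<^sup>2) =
        (\<Sum>r\<in>range e. (cmod (w $ r $ e c))\<^sup>2) + (\<Sum>r\<in>- range e. (cmod (w $ r $ e c))\<^sup>2)"
      by (simp add: sum.union_disjoint[symmetric])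
    moreover have "(\<Sum>r\<in>range e. (cmod (w $ r $ e c))\<^sup>2) = 1"
      using full[of c] by (simp add: submatrix_entry sum.reindex assms(2))
    ultimately have "(\<Sum>r\<in>- range e. (cmod (w $ r $ e c))\<^sup>2) = 0"
      using unitary_col_norm[OF assms(1)] by simp
    then show ?thesis
      using that by (simp add: sum_nonneg_eq_0_iff)
  qed
  have "adj (submatrix e w) ** submatrix e w = mat 1"
  proof (rule cmat_eqI)
    fix a c
    have "(adj (submatrix e w) ** submatrix e w) $ a $ c = (adj w ** w) $ e a $ e c"
      unfolding adj_mult_entry submatrix_entry
      by (rule sum_UNIV_supported_on_range[OF assms(2), symmetric]) (simp add: vanish)
    then show "(adj (submatrix e w) ** submatrix e w) $ a $ c = mat 1 $ a $ c"
      using assms(1,2) by (simp add: unitary_mat_def mat_one_entry inj_eq)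
  qed
  then show ?thesis
    by (simp add: unitary_mat_iff_isometry)
qed

lemma convex_comb_eq_one_imp:
  fixes p f :: "'a \<Rightarrow> real"
  assumes "finite I" and "\<forall>l\<in>I. 0 \<le> p l \<and> f l \<le> 1" and "sum p I = 1"
    and "(\<Sum>l\<in>I. p l * f l) = 1" and "l \<in> I" and "p l \<noteq> 0"
  shows "f l = 1"
proof -
  have "(\<Sum>l\<in>I. p l * (1 - f l)) = 0"
    using assms(3,4) by (simp add: right_diff_distrib sum_subtractf)
  moreover have "\<forall>l\<in>I. 0 \<le> p l * (1 - f l)"
    using assms(2) by simp
  ultimately have "p l * (1 - f l) = 0"
    using assms(1,5) by (simp add: sum_nonneg_eq_0_iff)
  with assms(6) show ?thesis
    by simp
qed

lemma conv_maps_Aut_compression: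
  fixes e :: "'n::finite \<Rightarrow> 'm::finite" and T :: "'n cmat \<Rightarrow> 'n cmat"
  assumes "inj e" and "\<Phi> \<in> conv_maps Aut" and unital: "T (mat 1) = mat 1"
    and compression: "\<And>x. T x = submatrix e (\<Phi> (extend_by_zero e x))"
  shows "T \<in> conv_maps Aut"
proof -
  obtain N :: nat and p w where w: "\<forall>l<N. 0 \<le> p l \<and> unitary_mat (w l)" and p: "(\<Sum>l<N. p l) = 1"
    and \<Phi>: "\<And>x. \<Phi> x = (\<Sum>l<N. p l *\<^sub>R Ad (w l) x)"
    using conv_maps_AutE[OF assms(2)] by blast
  define a where "a l = submatrix e (w l)" for l
  have T: "T x = (\<Sum>l<N. p l *\<^sub>R Ad (a l) x)" for x
    by (simp add: compression \<Phi> submatrix_sum_scaleR submatrix_Ad_extend_by_zero[OF assms(1)] a_def)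
  have a_unitary: "unitary_mat (a l)" if "l < N" and "p l \<noteq> 0" for l
    unfolding a_def
  proof (rule unitary_submatrix)
    show "unitary_mat (w l)"
      using w that(1) by blast
    show "(\<Sum>i\<in>UNIV. (cmod (submatrix e (w l) $ i $ c))\<^sup>2) = 1" for c
    proof (rule convex_comb_eq_one_imp[where I = "{..<N}" and p = p
        and f = "\<lambda>l. \<Sum>i\<in>UNIV. (cmod (submatrix e (w l) $ i $ c))\<^sup>2"])
      have "of_real (\<Sum>l<N. p l * (\<Sum>i\<in>UNIV. (cmod (submatrix e (w l) $ i $ c))\<^sup>2)) =
          (\<Sum>l<N. of_real (p l) * (adj (a l) ** a l) $ c $ c)"
        by (simp only: a_def adj_mult_self_diag of_real_sum of_real_mult)
      also have "\<dots> = T (mat 1) $ c $ c"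
        by (simp only: T matrix_mul_rid scaleR_sum_entry)
      also have "\<dots> = 1"
        by (simp add: unital mat_one_entry)
      finally show "(\<Sum>l<N. p l * (\<Sum>i\<in>UNIV. (cmod (submatrix e (w l) $ i $ c))\<^sup>2)) = 1"
        by (simp only: of_real_eq_1_iff)
      show "\<forall>l\<in>{..<N}. 0 \<le> p l \<and> (\<Sum>i\<in>UNIV. (cmod (submatrix e (w l) $ i $ c))\<^sup>2) \<le> 1"
        using w submatrix_col_norm_le[OF _ assms(1)] by blast
    qed (use p that in auto)
  qed (fact assms(1))
  \<comment> \<open>compressions carrying zero weight need not be unitary, so they are replaced\<close>
  define u where "u l = (if p l = 0 then mat 1 else a l)" for l
  have "unitary_mat (u l)" if "l < N" for l
    using a_unitary[OF that] by (simp add: u_def unitary_one)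
  show ?thesis
  proof (rule conv_maps_finI[where I = "{..<N}" and p = p and \<Phi> = "\<lambda>l. Ad (u l)"])
    show "\<forall>l\<in>{..<N}. 0 \<le> p l \<and> Ad (u l) \<in> Aut"
      using w \<open>\<And>l. l < N \<Longrightarrow> unitary_mat (u l)\<close> Ad_in_Aut by blast
    show "T x = (\<Sum>l<N. p l *\<^sub>R Ad (u l) x)" for x
      unfolding T by (rule sum.cong) (auto simp: u_def)
  qed (use p in auto)
qed

definition schur_product :: "'n::finite cmat \<Rightarrow> 'n cmat \<Rightarrow> 'n cmat" where
  "schur_product b x = (\<chi> i j. b $ i $ j * x $ i $ j)"

lemma schur_product_entry: "schur_product b x $ i $ j = b $ i $ j * x $ i $ j"
  by (simp add: schur_product_def)

lemma ucpt_schurE: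
  assumes "ucpt_schur T"
  obtains b where "T = schur_product b" and "\<And>i. b $ i $ i = 1"
proof -
  obtain b where T: "T = schur_product b" and unital: "T (mat 1) = mat 1"
    using assms unfolding ucpt_schur_def ucpt_def schur_product_def by blast
  have "b $ i $ i = 1" for i
    using arg_cong[OF unital, of "\<lambda>y. y $ i $ i"] by (simp add: T schur_product_entry mat_one_entry)
  with T show thesis
    using that by blast
qed

lemma schur_product_mat_one: "(\<And>i. b $ i $ i = 1) \<Longrightarrow> schur_product b (mat 1) = mat 1"
  by (rule cmat_eqI) (simp add: schur_product_entry mat_one_entry)

lemma tensor_map_schur_product:
  "tensor_map (schur_product b) (schur_product c) = schur_product (kron b c)"
proof (intro ext cmat_prod_eqI)
  fix x i k j l
  have "x $ (i', j') $ (k', l') * (schur_product b (unit_mat i' k') $ i $ k * schur_product c (unit_mat j' l') $ j $ l) =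
      (if l' = l then if j' = j then if k' = k then if i' = i then
         b $ i $ k * c $ j $ l * x $ (i, j) $ (k, l) else 0 else 0 else 0 else 0)" for i' j' k' l'
    by (auto simp: schur_product_entry unit_mat_entry)
  then show "tensor_map (schur_product b) (schur_product c) x $ (i, j) $ (k, l) =
      schur_product (kron b c) x $ (i, j) $ (k, l)"
    by (simp add: tensor_map_entry schur_product_entry kron_entry)
qed

lemma submatrix_schur_kron_left_slice:
  assumes "c $ j $ j = 1"
  shows "submatrix (\<lambda>i. (i, j)) (schur_product (kron b c) (extend_by_zero (\<lambda>i. (i, j)) x)) = schur_product b x"
proof -
  have inj: "inj (\<lambda>i. (i, j))"
    by (simp add: inj_def)
  show ?thesis
    using assms by (intro cmat_eqI) (simp add: submatrix_entry schur_product_entry kron_entry extend_by_zero_entry[OF inj])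
qed

lemma submatrix_schur_kron_right_slice:
  assumes "b $ i $ i = 1"
  shows "submatrix (Pair i) (schur_product (kron b c) (extend_by_zero (Pair i) x)) = schur_product c x"
proof -
  have inj: "inj (Pair i)"
    by (simp add: inj_def)
  show ?thesis
    using assms by (intro cmat_eqI) (simp add: submatrix_entry schur_product_entry kron_entry extend_by_zero_entry[OF inj])
qed

theorem theorem2p2:
  fixes T :: "'n::finite cmat \<Rightarrow> 'n cmat" and S :: "'k::finite cmat \<Rightarrow> 'k cmat"
  assumes "ucpt_schur T" and "ucpt_schur S"
  shows "tensor_map T S \<in> conv_maps Aut \<longleftrightarrow> T \<in> conv_maps Aut \<and> S \<in> conv_maps Aut"
proof -
  obtain b where T: "T = schur_product b" and b: "\<And>i. b $ i $ i = 1"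
    using ucpt_schurE[OF assms(1)] by blast
  obtain c where S: "S = schur_product c" and c: "\<And>j. c $ j $ j = 1"
    using ucpt_schurE[OF assms(2)] by blast
  have "T \<in> conv_maps Aut" if "tensor_map T S \<in> conv_maps Aut"
    using that b c
    by (intro conv_maps_Aut_compression[where e = "\<lambda>i. (i, undefined)" and \<Phi> = "tensor_map T S"])
       (simp_all add: inj_def T S tensor_map_schur_product submatrix_schur_kron_left_slice schur_product_mat_one)
  moreover have "S \<in> conv_maps Aut" if "tensor_map T S \<in> conv_maps Aut"
    using that b c
    by (intro conv_maps_Aut_compression[where e = "Pair undefined" and \<Phi> = "tensor_map T S"])
       (simp_all add: inj_def T S tensor_map_schur_product submatrix_schur_kron_right_slice schur_product_mat_one)
  ultimately show ?thesis
    using tensor_map_conv_maps_Aut by blast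
qed

end
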